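(* For any $\sigma,\tau\in\mathbb{T}$ such that $[\![\sigma]\!]$ and $[\![\tau]\!]$ are defined, $\sigma=\tau$ (in $\mathbb{T}$) if and only if $[\![\sigma]\!]=[\![\tau]\!]$ (in $\mathbb{T}_C$).
   Context: \textbf{Source types.} $\mathbb{T}\ni\sigma ::= a\mid\omega\mid\sigma_1\to\sigma_2\mid\sigma_1\cap\sigma_2\mid\rho$, $\mathbb{T}_R\ni\rho ::= \langle\rangle\mid\langle l:\sigma\rangle\mid\rho_1+\rho_2\mid\rho_1\cap\rho_2$. Subtyping $\le$ on $\mathbb{T}$: least preorder with $\sigma\le\omega$; $\omega\le\omega\to\omega$; $\sigma\cap\tau\le\sigma,\tau$; $\sigma\le\tau_1,\sigma\le\tau_2\Rightarrow\sigma\le\tau_1\cap\tau_2$; $(\sigma\to\tau_1)\cap(\sigma\to\tau_2)\le\sigma\to\tau_1\cap\tau_2$; $\sigma_2\le\sigma_1,\tau_1\le\tau_2\Rightarrow\sigma_1\to\tau_1\le\sigma_2\to\tau_2$; $\langle l:\sigma\rangle\le\langle\rangle$; $\langle l:\sigma\rangle\cap\langle l:\tau\rangle\le\langle l:\sigma\cap\tau\rangle$; $\sigma\le\tau\Rightarrow\langle l:\sigma\rangle\le\langle l:\tau\rangle$; $\rho+\langle\rangle=\langle\rangle+\rho=\rho$; $(\rho_1+\rho_2)+\rho_3=\rho_1+(\rho_2+\rho_3)$; $(\rho_1\cap\rho_2)+\rho_3=(\rho_1+\rho_3)\cap(\rho_2+\rho_3)$; $\langle l:\sigma\rangle+(\langle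 l:\tau\rangle\cap\rho)=\langle l:\tau\rangle\cap\rho$; $\langle l:\sigma\rangle+(\langle l':\tau\rangle\cap\rho)=\langle l':\tau\rangle\cap(\langle l:\sigma\rangle+\rho)$ if $l\neq l'$; $\rho_1\le\rho_2\Rightarrow\rho_1+\rho\le\rho_2+\rho$; $\rho_1=\rho_2\Rightarrow\rho+\rho_1=\rho+\rho_2$. $\sigma=\tau$ means $\sigma\le\tau$ and $\tau\le\sigma$. \textbf{Target types.} $\mathbb{T}_C\ni\tau ::= a\mid\alpha\mid\omega\mid\tau_1\to\tau_2\mid\tau_1\cap\tau_2\mid c(\tau)$ ($c$ unary constructors) with subtyping given by the arrow/intersection axioms above plus $\tau_1\le\tau_2\Rightarrow c(\tau_1)\le c(\tau_2)$ and $c(\tau_1)\cap c(\tau_2)\le c(\tau_1\cap\tau_2)$; $=$ is equivalence. \textbf{Translation.} $\mathcal{L}$ is a fixed finite set of labels; constructors $\langle\!\langle\cdot\rangle\!\rangle$ and $l(\cdot)$ for $l\in\mathcal{L}$. Partial map $[\![\omega]\!]=\omega$, $[\![a]\!]=a$, $[\![\sigma\to\tau]\!]=[\![\sigma]\!]\to[\![\tau]\!]$, $[\![\sigma\cap\tau]\!]=[\![\sigma]\!]\cap[\![\tau]\!]$, $[\![\langle l:\tau\rangle]\!]=\langle\!\langle l([\![\tau]\!])\rangle\!\rangle$ for $l\in\mathcal{L}$, $[\![\langle\rangle]\!]=\langle\!\langle\omega\rangle\!\rangle$; it is undefined on types containing $+$. *)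

theory Defs
  imports Main
begin

datatype ('a, 'l) sty =
    SAtom 'a
  | SOmega
  | SArr "('a, 'l) sty" "('a, 'l) sty"
  | SInter "('a, 'l) sty" "('a, 'l) sty"
  | SEmpty
  | SField 'l "('a, 'l) sty"
  | SPlus "('a, 'l) sty" "('a, 'l) sty"

text \<open>swf: membership in T; isrec: membership in T_R.\<close>
fun swf :: "('a, 'l) sty \<Rightarrow> bool" and isrec :: "('a, 'l) sty \<Rightarrow> bool" where
  "swf (SAtom a) = True"
| "swf SOmega = True"
| "swf (SArr s t) = (swf s \<and> swf t)"
| "swf (SInter s t) = (swf s \<and> swf t)"
| "swf SEmpty = True"
| "swf (SField l s) = swf s"
| "swf (SPlus r1 r2) = (isrec r1 \<and> isrec r2)"
| "isrec SEmpty = True"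
| "isrec (SField l s) = swf s"
| "isrec (SPlus r1 r2) = (isrec r1 \<and> isrec r2)"
| "isrec (SInter r1 r2) = (isrec r1 \<and> isrec r2)"
| "isrec (SAtom a) = False"
| "isrec SOmega = False"
| "isrec (SArr s t) = False"

inductive ssub :: "('a, 'l) sty \<Rightarrow> ('a, 'l) sty \<Rightarrow> bool" where
  s_refl: "swf s \<Longrightarrow> ssub s s"
| s_trans: "ssub s t \<Longrightarrow> ssub t u \<Longrightarrow> ssub s u"
| s_omega: "swf s \<Longrightarrow> ssub s SOmega"
| s_omega_arr: "ssub SOmega (SArr SOmega SOmega)"
| s_inter1: "swf s \<Longrightarrow> swf t \<Longrightarrow> ssub (SInter s t) s"
| s_inter2: "swf s \<Longrightarrow> swf t \<Longrightarrow> ssub (SInter s t) t"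
| s_glb: "ssub s t1 \<Longrightarrow> ssub s t2 \<Longrightarrow> ssub s (SInter t1 t2)"
| s_arr_dist: "swf s \<Longrightarrow> swf t1 \<Longrightarrow> swf t2 \<Longrightarrow>
    ssub (SInter (SArr s t1) (SArr s t2)) (SArr s (SInter t1 t2))"
| s_arr: "ssub s2 s1 \<Longrightarrow> ssub t1 t2 \<Longrightarrow> ssub (SArr s1 t1) (SArr s2 t2)"
| s_field_empty: "swf s \<Longrightarrow> ssub (SField l s) SEmpty"
| s_field_inter: "swf s \<Longrightarrow> swf t \<Longrightarrow>
    ssub (SInter (SField l s) (SField l t)) (SField l (SInter s t))"
| s_field: "ssub s t \<Longrightarrow> ssub (SField l s) (SField l t)"
| s_plus_empty_r1: "isrec r \<Longrightarrow> ssub (SPlus r SEmpty) r"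
| s_plus_empty_r2: "isrec r \<Longrightarrow> ssub r (SPlus r SEmpty)"
| s_plus_empty_l1: "isrec r \<Longrightarrow> ssub (SPlus SEmpty r) r"
| s_plus_empty_l2: "isrec r \<Longrightarrow> ssub r (SPlus SEmpty r)"
| s_plus_assoc1: "isrec r1 \<Longrightarrow> isrec r2 \<Longrightarrow> isrec r3 \<Longrightarrow>
    ssub (SPlus (SPlus r1 r2) r3) (SPlus r1 (SPlus r2 r3))"
| s_plus_assoc2: "isrec r1 \<Longrightarrow> isrec r2 \<Longrightarrow> isrec r3 \<Longrightarrow>
    ssub (SPlus r1 (SPlus r2 r3)) (SPlus (SPlus r1 r2) r3)"
| s_plus_dist1: "isrec r1 \<Longrightarrow> isrec r2 \<Longrightarrow> isrec r3 \<Longrightarrow>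
    ssub (SPlus (SInter r1 r2) r3) (SInter (SPlus r1 r3) (SPlus r2 r3))"
| s_plus_dist2: "isrec r1 \<Longrightarrow> isrec r2 \<Longrightarrow> isrec r3 \<Longrightarrow>
    ssub (SInter (SPlus r1 r3) (SPlus r2 r3)) (SPlus (SInter r1 r2) r3)"
| s_plus_same1: "swf s \<Longrightarrow> swf t \<Longrightarrow> isrec r \<Longrightarrow>
    ssub (SPlus (SField l s) (SInter (SField l t) r)) (SInter (SField l t) r)"
| s_plus_same2: "swf s \<Longrightarrow> swf t \<Longrightarrow> isrec r \<Longrightarrow>
    ssub (SInter (SField l t) r) (SPlus (SField l s) (SInter (SField l t) r))"
| s_plus_diff1: "l \<noteq> l' \<Longrightarrow> swf s \<Longrightarrow> swf t \<Longrightarrow> isrec r \<Longrightarrow>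
    ssub (SPlus (SField l s) (SInter (SField l' t) r)) (SInter (SField l' t) (SPlus (SField l s) r))"
| s_plus_diff2: "l \<noteq> l' \<Longrightarrow> swf s \<Longrightarrow> swf t \<Longrightarrow> isrec r \<Longrightarrow>
    ssub (SInter (SField l' t) (SPlus (SField l s) r)) (SPlus (SField l s) (SInter (SField l' t) r))"
| s_plus_mono_l: "ssub r1 r2 \<Longrightarrow> isrec r1 \<Longrightarrow> isrec r2 \<Longrightarrow> isrec r \<Longrightarrow>
    ssub (SPlus r1 r) (SPlus r2 r)"
| s_plus_cong_r: "ssub r1 r2 \<Longrightarrow> ssub r2 r1 \<Longrightarrow> isrec r1 \<Longrightarrow> isrec r2 \<Longrightarrow> isrec r \<Longrightarrow>
    ssub (SPlus r r1) (SPlus r r2)"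

definition seq :: "('a, 'l) sty \<Rightarrow> ('a, 'l) sty \<Rightarrow> bool" where
  "seq s t \<longleftrightarrow> ssub s t \<and> ssub t s"

datatype ('a, 'v, 'c) tty =
    TAtom 'a
  | TVar 'v
  | TOmega
  | TArr "('a, 'v, 'c) tty" "('a, 'v, 'c) tty"
  | TInter "('a, 'v, 'c) tty" "('a, 'v, 'c) tty"
  | TCon 'c "('a, 'v, 'c) tty"

inductive tsub :: "('a, 'v, 'c) tty \<Rightarrow> ('a, 'v, 'c) tty \<Rightarrow> bool" where
  t_refl: "tsub s s"
| t_trans: "tsub s t \<Longrightarrow> tsub t u \<Longrightarrow> tsub s u"
| t_omega: "tsub s TOmega"
| t_omega_arr: "tsub TOmega (TArr TOmega TOmega)"
| t_inter1: "tsub (TInter s t) s"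
| t_inter2: "tsub (TInter s t) t"
| t_glb: "tsub s t1 \<Longrightarrow> tsub s t2 \<Longrightarrow> tsub s (TInter t1 t2)"
| t_arr_dist: "tsub (TInter (TArr s t1) (TArr s t2)) (TArr s (TInter t1 t2))"
| t_arr: "tsub s2 s1 \<Longrightarrow> tsub t1 t2 \<Longrightarrow> tsub (TArr s1 t1) (TArr s2 t2)"
| t_con: "tsub t1 t2 \<Longrightarrow> tsub (TCon c t1) (TCon c t2)"
| t_con_dist: "tsub (TInter (TCon c t1) (TCon c t2)) (TCon c (TInter t1 t2))"

definition teq :: "('a, 'v, 'c) tty \<Rightarrow> ('a, 'v, 'c) tty \<Rightarrow> bool" where
  "teq s t \<longleftrightarrow> tsub s t \<and> tsub t s"

text \<open>Constructors: the record constructor \<langle>\<langle>.\<rangle>\<rangle> and one constructor per label.\<close>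
datatype 'l ctor = RecC | LabC 'l

fun transl :: "'l set \<Rightarrow> ('a, 'l) sty \<Rightarrow> ('a, 'v, 'l ctor) tty option" where
  "transl L SOmega = Some TOmega"
| "transl L (SAtom a) = Some (TAtom a)"
| "transl L (SArr s t) =
     (case (transl L s, transl L t) of (Some s', Some t') \<Rightarrow> Some (TArr s' t') | _ \<Rightarrow> None)"
| "transl L (SInter s t) =
     (case (transl L s, transl L t) of (Some s', Some t') \<Rightarrow> Some (TInter s' t') | _ \<Rightarrow> None)"
| "transl L (SField l s) =
     (if l \<in> L then map_option (\<lambda>t. TCon RecC (TCon (LabC l) t)) (transl L s) else None)"
| "transl L SEmpty = Some (TCon RecC TOmega)"
| "transl L (SPlus r1 r2) = None"

end

theory Submission
  imports Defs
begin

text \<open>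
  Soundness: extend the translation to all of \<open>\<T>\<close> by flattening a record type into its list of
  fields, reading \<open>+\<close> as right-biased override of field lists and the resulting list as an
  intersection of translated fields. Every axiom of \<open>\<T>\<close> then becomes a derivable inequality
  in \<open>\<T>\<^sub>C\<close>. For the congruence rules of \<open>+\<close> the induction carries, besides the target
  inequality, a field-wise comparison of the field lists, which override respects.

  Completeness: a back-translation from \<open>\<T>\<^sub>C\<close> to \<open>\<T>\<close>, reading \<open>\<langle>\<langle>\<cdot>\<rangle>\<rangle>\<close> as the start of a
  record and \<open>l(\<cdot>)\<close> inside it as the field \<open>\<langle>l:\<cdot>\<rangle>\<close>, maps every target axiom to a source
  inequality and inverts the translation.
\<close>

abbreviation empty_rec :: "('a, 'v, 'l ctor) tty" where
  "empty_rec \<equiv> TCon RecC TOmega"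

abbreviation field_ty :: "'l \<Rightarrow> ('a, 'v, 'l ctor) tty \<Rightarrow> ('a, 'v, 'l ctor) tty" where
  "field_ty l t \<equiv> TCon RecC (TCon (LabC l) t)"

lemmas tsub_basic = t_refl t_omega t_omega_arr t_inter1 t_inter2 t_glb t_arr_dist t_arr t_con t_con_dist

lemma teq_sym: "teq s t \<longleftrightarrow> teq t s"
  by (auto simp: teq_def)

lemma teq_trans: "teq s t \<Longrightarrow> teq t u \<Longrightarrow> teq s u"
  unfolding teq_def by (blast intro: t_trans)

lemma tsub_inter1_trans: "tsub s u \<Longrightarrow> tsub (TInter s t) u"
  by (rule t_trans[OF t_inter1])

lemma tsub_inter2_trans: "tsub t u \<Longrightarrow> tsub (TInter s t) u"
  by (rule t_trans[OF t_inter2])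

lemma teq_TInter_cong: "teq s s' \<Longrightarrow> teq t t' \<Longrightarrow> teq (TInter s t) (TInter s' t')"
  unfolding teq_def by (blast intro: t_glb tsub_inter1_trans tsub_inter2_trans)

lemma tsub_field_ty_inter: "tsub (TInter (field_ty l s) (field_ty l t)) (field_ty l (TInter s t))"
  by (meson t_con t_con_dist t_trans)

definition inters :: "('a, 'v, 'c) tty list \<Rightarrow> ('a, 'v, 'c) tty" where
  "inters ts = foldr TInter ts TOmega"

lemma tsub_inters_member: "t \<in> set ts \<Longrightarrow> tsub (inters ts) t"
  by (induction ts) (auto simp: inters_def intro: tsub_basic tsub_inter2_trans)

lemma tsub_inters_glb: "(\<And>t. t \<in> set ts \<Longrightarrow> tsub s t) \<Longrightarrow> tsub s (inters ts)"
  by (induction ts) (auto simp: inters_def intro: tsub_basic)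

type_synonym ('a, 'v, 'l) fields = "('l \<times> ('a, 'v, 'l ctor) tty) list"

fun rec_ty :: "('a, 'v, 'l) fields \<Rightarrow> ('a, 'v, 'l ctor) tty" where
  "rec_ty [] = empty_rec"
| "rec_ty ((l, t) # fs) = TInter (field_ty l t) (rec_ty fs)"

lemma tsub_rec_ty_field: "(l, t) \<in> set fs \<Longrightarrow> tsub (rec_ty fs) (field_ty l t)"
  by (induction fs rule: rec_ty.induct) (auto intro: tsub_basic tsub_inter2_trans)

lemma tsub_rec_ty_empty: "tsub (rec_ty fs) empty_rec"
  by (induction fs rule: rec_ty.induct) (auto intro: tsub_basic tsub_inter2_trans)

lemma tsub_rec_tyI:
  "(\<And>l t. (l, t) \<in> set fs \<Longrightarrow> tsub s (field_ty l t)) \<Longrightarrow> tsub s empty_rec \<Longrightarrow> tsub s (rec_ty fs)"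
  by (induction fs rule: rec_ty.induct) (auto intro: tsub_basic)

lemma tsub_rec_ty_subset: "set gs \<subseteq> set fs \<Longrightarrow> tsub (rec_ty fs) (rec_ty gs)"
  by (rule tsub_rec_tyI) (auto intro: tsub_rec_ty_field tsub_rec_ty_empty)

lemma teq_rec_ty_append: "teq (rec_ty (fs @ gs)) (TInter (rec_ty fs) (rec_ty gs))"
  unfolding teq_def
proof
  show "tsub (rec_ty (fs @ gs)) (TInter (rec_ty fs) (rec_ty gs))"
    by (intro t_glb tsub_rec_ty_subset) auto
  show "tsub (TInter (rec_ty fs) (rec_ty gs)) (rec_ty (fs @ gs))"
    by (rule tsub_rec_tyI)
      (auto intro: tsub_inter1_trans tsub_inter2_trans tsub_rec_ty_field tsub_rec_ty_empty)
qed

lemma teq_TInter_rec_ty_append: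
  "teq s (rec_ty fs) \<Longrightarrow> teq t (rec_ty gs) \<Longrightarrow> teq (TInter s t) (rec_ty (fs @ gs))"
  by (meson teq_TInter_cong teq_rec_ty_append teq_sym teq_trans)

definition field_types :: "('l \<times> 'b) list \<Rightarrow> 'l \<Rightarrow> 'b list" where
  "field_types fs l = map snd (filter (\<lambda>p. fst p = l) fs)"

definition fields_le :: "('l \<times> ('a, 'v, 'c) tty) list \<Rightarrow> ('l \<times> ('a, 'v, 'c) tty) list \<Rightarrow> bool" where
  "fields_le fs gs \<longleftrightarrow>
     (\<forall>(l, t)\<in>set gs. field_types fs l \<noteq> [] \<and> tsub (inters (field_types fs l)) t)"

definition override :: "('l \<times> 'b) list \<Rightarrow> ('l \<times> 'b) list \<Rightarrow> ('l \<times> 'b) list" where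
  "override fs gs = filter (\<lambda>p. fst p \<notin> fst ` set gs) fs @ gs"

lemma field_types_memI: "(l, t) \<in> set fs \<Longrightarrow> t \<in> set (field_types fs l)"
  by (force simp: field_types_def)

lemma field_types_memD: "t \<in> set (field_types fs l) \<Longrightarrow> (l, t) \<in> set fs"
  by (auto simp: field_types_def)

lemma field_types_eq_Nil_iff: "field_types fs l = [] \<longleftrightarrow> l \<notin> fst ` set fs"
  by (force simp: field_types_def filter_empty_conv)

lemma field_types_override:
  "field_types (override fs gs) l = (if l \<in> fst ` set gs then field_types gs l else field_types fs l)"
proof -
  have "filter (\<lambda>p. fst p = l) (filter (\<lambda>p. fst p \<notin> fst ` set gs) fs) =
     (if l \<in> fst ` set gs then [] else filter (\<lambda>p. fst p = l) fs)"
    by (induction fs) auto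
  moreover have "l \<notin> fst ` set gs \<Longrightarrow> filter (\<lambda>p. fst p = l) gs = []"
    by (auto simp: filter_empty_conv)
  ultimately show ?thesis
    unfolding field_types_def override_def by simp
qed

lemma fst_set_override: "fst ` set (override fs gs) = fst ` set fs \<union> fst ` set gs"
  by (auto simp: override_def)

lemma override_assoc: "override (override fs gs) hs = override fs (override gs hs)"
  unfolding override_def[of fs "override gs hs"] fst_set_override by (auto simp: override_def)

lemma tsub_inters_field_ty:
  "ts \<noteq> [] \<Longrightarrow> tsub (inters (map (field_ty l) ts)) (field_ty l (inters ts))"
proof (induction ts)
  case (Cons t ts)
  show ?case
  proof (cases "ts = []")
    case True
    then show ?thesis
      by (simp add: inters_def) (intro tsub_inter1_trans t_con t_glb t_refl t_omega)
  next
    case False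
    then have "tsub (inters (map (field_ty l) (t # ts))) (TInter (field_ty l t) (field_ty l (inters ts)))"
      using Cons.IH by (auto simp: inters_def intro: tsub_basic tsub_inter2_trans)
    then show ?thesis
      using tsub_field_ty_inter[of l t "inters ts"] by (simp add: inters_def) (meson t_trans)
  qed
qed simp

lemma tsub_rec_ty_field_types:
  assumes "field_types fs l \<noteq> []"
  shows "tsub (rec_ty fs) (field_ty l (inters (field_types fs l)))"
proof (rule t_trans)
  show "tsub (rec_ty fs) (inters (map (field_ty l) (field_types fs l)))"
    by (rule tsub_inters_glb) (auto intro: tsub_rec_ty_field dest: field_types_memD)
  show "tsub (inters (map (field_ty l) (field_types fs l))) (field_ty l (inters (field_types fs l)))"
    using assms by (rule tsub_inters_field_ty)
qed

lemma tsub_rec_ty_if_fields_le: "fields_le fs gs \<Longrightarrow> tsub (rec_ty fs) (rec_ty gs)"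
proof (rule tsub_rec_tyI)
  fix l t assume "fields_le fs gs" and "(l, t) \<in> set gs"
  then have "field_types fs l \<noteq> []" and "tsub (inters (field_types fs l)) t"
    by (auto simp: fields_le_def)
  then show "tsub (rec_ty fs) (field_ty l t)"
    by (meson tsub_rec_ty_field_types t_con t_trans)
qed (rule tsub_rec_ty_empty)

lemma fields_le_Nil: "fields_le fs []"
  by (simp add: fields_le_def)

lemma fields_le_subset: "set gs \<subseteq> set fs \<Longrightarrow> fields_le fs gs"
  unfolding fields_le_def
  by (auto intro!: tsub_inters_member field_types_memI) (metis field_types_memI empty_iff list.set(1) subsetD)

lemma fields_le_append: "fields_le fs gs \<Longrightarrow> fields_le fs hs \<Longrightarrow> fields_le fs (gs @ hs)"
  unfolding fields_le_def by auto

lemma fields_le_fst_set: "fields_le fs gs \<Longrightarrow> fst ` set gs \<subseteq> fst ` set fs"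
  unfolding fields_le_def using field_types_eq_Nil_iff by fastforce

lemma fields_le_trans:
  assumes fg: "fields_le fs gs" and gh: "fields_le gs hs"
  shows "fields_le fs hs"
  unfolding fields_le_def
proof (intro ballI, clarify, intro conjI)
  fix l u assume "(l, u) \<in> set hs"
  with gh have gs_l: "field_types gs l \<noteq> []" and "tsub (inters (field_types gs l)) u"
    by (auto simp: fields_le_def)
  have below: "\<And>t. t \<in> set (field_types gs l) \<Longrightarrow>
      field_types fs l \<noteq> [] \<and> tsub (inters (field_types fs l)) t"
    using fg by (auto simp: fields_le_def dest: field_types_memD)
  then show "field_types fs l \<noteq> []"
    using gs_l by (metis list.set_intros(1) neq_Nil_conv)
  have "tsub (inters (field_types fs l)) (inters (field_types gs l))"
    using below by (blast intro: tsub_inters_glb)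
  then show "tsub (inters (field_types fs l)) u"
    using \<open>tsub (inters (field_types gs l)) u\<close> by (rule t_trans)
qed

lemma fields_le_override_left: "fields_le fs gs \<Longrightarrow> fields_le (override fs hs) (override gs hs)"
  unfolding fields_le_def
proof (intro ballI, clarify)
  fix l t assume le: "\<forall>(l, t)\<in>set gs. field_types fs l \<noteq> [] \<and> tsub (inters (field_types fs l)) t"
    and lt: "(l, t) \<in> set (override gs hs)"
  show "field_types (override fs hs) l \<noteq> [] \<and> tsub (inters (field_types (override fs hs) l)) t"
  proof (cases "l \<in> fst ` set hs")
    case True
    with lt have "(l, t) \<in> set hs" by (force simp: override_def)
    with True show ?thesis
      by (auto simp: field_types_override intro: tsub_inters_member dest: field_types_memI)
  next
    case False
    with lt have "(l, t) \<in> set gs" by (force simp: override_def)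
    with False le show ?thesis by (auto simp: field_types_override)
  qed
qed

lemma fields_le_override_right:
  assumes "fields_le fs gs" and "fields_le gs fs"
  shows "fields_le (override hs fs) (override hs gs)"
  unfolding fields_le_def
proof (intro ballI, clarify)
  have same_labels: "fst ` set fs = fst ` set gs"
    using assms by (blast dest: fields_le_fst_set)
  fix l t assume lt: "(l, t) \<in> set (override hs gs)"
  show "field_types (override hs fs) l \<noteq> [] \<and> tsub (inters (field_types (override hs fs) l)) t"
  proof (cases "l \<in> fst ` set gs")
    case True
    with lt have "(l, t) \<in> set gs" by (force simp: override_def)
    with True same_labels assms(1) show ?thesis
      by (auto simp: field_types_override fields_le_def)
  next
    case False
    with lt have "(l, t) \<in> set hs" by (force simp: override_def)
    with False same_labels show ?thesis
      by (auto simp: field_types_override intro: tsub_inters_member dest: field_types_memI)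
  qed
qed

fun tr :: "('a, 'l) sty \<Rightarrow> ('a, 'v, 'l ctor) tty"
and rec_fields :: "('a, 'l) sty \<Rightarrow> ('a, 'v, 'l) fields" where
  "tr (SAtom a) = TAtom a"
| "tr SOmega = TOmega"
| "tr (SArr s t) = TArr (tr s) (tr t)"
| "tr (SInter s t) = TInter (tr s) (tr t)"
| "tr SEmpty = empty_rec"
| "tr (SField l s) = field_ty l (tr s)"
| "tr (SPlus r1 r2) = rec_ty (override (rec_fields r1) (rec_fields r2))"
| "rec_fields SEmpty = []"
| "rec_fields (SField l s) = [(l, tr s)]"
| "rec_fields (SInter r1 r2) = rec_fields r1 @ rec_fields r2"
| "rec_fields (SPlus r1 r2) = override (rec_fields r1) (rec_fields r2)"
| "rec_fields (SAtom a) = []"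
| "rec_fields SOmega = []"
| "rec_fields (SArr s t) = []"

lemma transl_Some_eq_tr: "transl L \<sigma> = Some s \<Longrightarrow> s = tr \<sigma>"
  by (induction \<sigma> arbitrary: s) (auto split: option.splits if_splits)

lemma isrec_imp_swf: "isrec r \<Longrightarrow> swf r"
  by (induction r) auto

lemma teq_tr_rec_ty: "isrec r \<Longrightarrow> teq (tr r) (rec_ty (rec_fields r))"
proof (induction r)
  case (SField l s)
  show ?case
    unfolding teq_def by (simp add: t_glb t_refl t_inter1 t_con t_omega)
next
  case (SInter r1 r2)
  then show ?case by (simp add: teq_TInter_rec_ty_append)
qed (simp_all add: teq_def t_refl)

lemma tsub_tr_if_fields_le:
  assumes "isrec r1" and "isrec r2" and "fields_le (rec_fields r1 :: ('a, 'v, 'l) fields) (rec_fields r2)"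
  shows "tsub (tr r1 :: ('a, 'v, 'l ctor) tty) (tr r2)"
  using teq_tr_rec_ty[OF assms(1)] teq_tr_rec_ty[OF assms(2)] tsub_rec_ty_if_fields_le[OF assms(3)]
  unfolding teq_def by (meson t_trans)

lemma tsub_tr_if_fields_subset:
  assumes "isrec r1" and "isrec r2"
    and "set (rec_fields r2 :: ('a, 'v, 'l) fields) \<subseteq> set (rec_fields r1)"
  shows "tsub (tr r1 :: ('a, 'v, 'l ctor) tty) (tr r2) \<and>
    fields_le (rec_fields r1 :: ('a, 'v, 'l) fields) (rec_fields r2)"
  using assms by (simp add: tsub_tr_if_fields_le fields_le_subset)

lemma ssub_imp_tsub_tr:
  "ssub \<sigma> \<tau> \<Longrightarrow>
    tsub (tr \<sigma> :: ('a, 'v, 'l ctor) tty) (tr \<tau>) \<and> fields_le (rec_fields \<sigma> :: ('a, 'v, 'l) fields) (rec_fields \<tau>)"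
proof (induction rule: ssub.induct)
  case (s_trans s t u)
  then show ?case by (meson fields_le_trans t_trans)
next
  case (s_glb s t1 t2)
  then show ?case by (simp add: t_glb fields_le_append)
next
  case (s_field_inter s t l)
  then show ?case
    by (simp add: tsub_field_ty_inter fields_le_def field_types_def inters_def)
      (meson t_glb t_inter1 tsub_inter2_trans)
next
  case (s_field s t l)
  then show ?case by (simp add: t_con fields_le_def field_types_def inters_def tsub_inter1_trans)
next
  case (s_plus_mono_l r1 r2 r)
  then show ?case by (intro conjI tsub_tr_if_fields_le) (auto intro: fields_le_override_left)
next
  case (s_plus_cong_r r1 r2 r)
  then show ?case by (intro conjI tsub_tr_if_fields_le) (auto intro: fields_le_override_right)
  \<comment> \<open>each remaining axiom for \<open>+\<close> relates record types whose field lists include one another\<close>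
qed ((simp add: t_refl t_omega t_omega_arr t_inter1 t_inter2 t_arr_dist t_arr t_con
        fields_le_subset fields_le_Nil; fail)
    | (rule tsub_tr_if_fields_subset; (auto simp: override_assoc; fail)?; auto simp: override_def))+

text \<open>\<open>untransl_rec\<close> reads the argument of \<open>\<langle>\<langle>\<cdot>\<rangle>\<rangle>\<close>; ill-formed pieces, which never arise from the
  translation, are sent to \<open>\<omega>\<close> or \<open>\<langle>\<rangle>\<close>.\<close>

fun untransl :: "('a, 'v, 'l ctor) tty \<Rightarrow> ('a, 'l) sty"
and untransl_rec :: "('a, 'v, 'l ctor) tty \<Rightarrow> ('a, 'l) sty" where
  "untransl (TAtom a) = SAtom a"
| "untransl (TVar v) = SOmega"
| "untransl TOmega = SOmega"
| "untransl (TArr s t) = SArr (untransl s) (untransl t)"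
| "untransl (TInter s t) = SInter (untransl s) (untransl t)"
| "untransl (TCon RecC t) = untransl_rec t"
| "untransl (TCon (LabC l) t) = SOmega"
| "untransl_rec (TCon (LabC l) t) = SField l (untransl t)"
| "untransl_rec (TInter s t) = SInter (untransl_rec s) (untransl_rec t)"
| "untransl_rec (TAtom a) = SEmpty"
| "untransl_rec (TVar v) = SEmpty"
| "untransl_rec TOmega = SEmpty"
| "untransl_rec (TArr s t) = SEmpty"
| "untransl_rec (TCon RecC t) = SEmpty"

lemma untransl_transl: "transl L \<sigma> = Some s \<Longrightarrow> untransl s = \<sigma>"
  by (induction \<sigma> arbitrary: s) (auto split: option.splits if_splits)

lemma wf_untransl: "swf (untransl t) \<and> isrec (untransl_rec t)"
proof (induction t)
  case (TCon c t)
  then show ?case by (cases c) (auto simp: isrec_imp_swf)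
qed auto

lemmas swf_untransl = wf_untransl[THEN conjunct1]

lemma swf_untransl_rec: "swf (untransl_rec t)"
  using wf_untransl isrec_imp_swf by blast

lemma ssub_untransl_rec_empty: "ssub (untransl_rec t) SEmpty"
proof (induction t)
  case (TInter t1 t2)
  then show ?case
    by (simp add: s_trans[OF s_inter1[OF swf_untransl_rec swf_untransl_rec]])
next
  case (TCon c t)
  then show ?case
    using swf_untransl by (cases c) (auto intro: s_refl s_field_empty)
qed (auto intro: s_refl)

lemma tsub_imp_ssub_untransl:
  "tsub s t \<Longrightarrow> ssub (untransl s) (untransl t) \<and> ssub (untransl_rec s) (untransl_rec t)"
proof (induction rule: tsub.induct)
  case (t_trans s t u)
  then show ?case by (meson s_trans)
next
  case (t_omega s)
  then show ?case
    by (simp add: s_omega swf_untransl ssub_untransl_rec_empty)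
next
  case (t_con t1 t2 c)
  then show ?case by (cases c) (auto simp: s_refl s_field)
next
  case (t_con_dist c t1 t2)
  then show ?case
    by (cases c) (simp_all add: s_refl s_inter1 s_field_inter swf_untransl swf_untransl_rec)
qed (simp_all add: s_refl s_inter1 s_inter2 s_glb s_arr_dist s_arr s_omega_arr
      swf_untransl swf_untransl_rec)

theorem lemma5p1:
  fixes L :: "'l set"
    and \<sigma> \<tau> :: "('a, 'l) sty"
    and s t :: "('a, 'v, 'l ctor) tty"
  assumes "finite L"
    and "swf \<sigma>" and "swf \<tau>"
    and "transl L \<sigma> = Some s"
    and "transl L \<tau> = Some t"
  shows "seq \<sigma> \<tau> \<longleftrightarrow> teq s t"
proof
  have s: "s = tr \<sigma>" and t: "t = tr \<tau>"
    using assms(4,5) by (auto dest: transl_Some_eq_tr)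
  assume "seq \<sigma> \<tau>"
  then show "teq s t"
    unfolding seq_def teq_def s t by (blast dest: ssub_imp_tsub_tr)
next
  have "untransl s = \<sigma>" and "untransl t = \<tau>"
    using assms(4,5) by (auto dest: untransl_transl)
  moreover assume "teq s t"
  ultimately show "seq \<sigma> \<tau>"
    unfolding seq_def teq_def by (metis tsub_imp_ssub_untransl)
qed

end
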